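(* Let $G=(A\cup B,E)$ be a bipartite graph with orderings $\sigma_A=(a_1,\ldots,a_n)$ of $A$ and $\sigma_B=(b_1,\ldots,b_m)$ of $B$, and let $M$ be the ordered bipartite adjacency matrix with rows $a_1,\ldots,a_n$, columns $b_1,\ldots,b_m$, and entry $m_{i,p}=1$ if $a_ib_p\in E$ and $0$ otherwise. Then $G$ admits a Stick representation respecting $\sigma_A$ and $\sigma_B$ if and only if $M$ contains none of the following ordered submatrices (where $*$ denotes an arbitrary entry $0$ or $1$): (P1) rows $i<j<k$ and columns $p<q<r$ with $m_{i,q}=1$, $m_{j,q}=0$, $m_{j,r}=1$, $m_{k,p}=1$; (P2) rows $i<j<k$ and columns $p<q$ with $m_{i,p}=1$, $m_{j,p}=0$, $m_{j,q}=1$, $m_{k,p}=1$; (P3) rows $i<j$ and columns $p<q<r$ with $m_{i,q}=1$, $m_{j,p}=1$, $m_{j,q}=0$, $m_{j,r}=1$. That is, the forbidden patterns are $P_1=\begin{bmatrix} * & 1 & * \\ * & 0 & 1 \\ 1 & * & * \end{bmatrix}$, $P_2=\begin{bmatrix} 1 & * \\ 0 & 1 \\ 1 & * \end{bmatrix}$, $P_3=\begin{bmatrix} * & 1 & * \\ 1 & 0 & 1 \end{bmatrix}$, with rows and columns taken in the given order.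
   Context: A Stick representation of a bipartite graph $G=(A\cup B,E)$ (with $A$ horizontal and $B$ vertical) assigns to each vertex of $A$ a horizontal segment and to each vertex of $B$ a vertical segment such that the left endpoints of all horizontal segments and the bottom endpoints of all vertical segments lie on a fixed ground line $\ell$ of slope $-1$, and a horizontal and a vertical segment intersect if and only if the corresponding vertices are adjacent in $G$. The representation respects $\sigma_A$ and $\sigma_B$ if, ordering the points where segments touch $\ell$ from left to right, the $i$th horizontal segment corresponds to the $i$th vertex of $\sigma_A$ and the $j$th vertical segment corresponds to the $j$th vertex of $\sigma_B$. An ordered submatrix uses a subset of rows and a subset of columns in their original relative order. *)

theory Defs
  imports Main "HOL.Real"
begin

text \<open>Ground line: the line y = -x (slope -1); a point on it is (x, -x), and
  "left to right" along the line means increasing x.\<close>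

definition hseg :: "real \<Rightarrow> real \<Rightarrow> (real \<times> real) set" where
  "hseg x h = {(t, - x) | t. x \<le> t \<and> t \<le> x + h}"

definition vseg :: "real \<Rightarrow> real \<Rightarrow> (real \<times> real) set" where
  "vseg x v = {(x, s) | s. - x \<le> s \<and> s \<le> - x + v}"

definition stick_rep ::
  "'a list \<Rightarrow> 'b list \<Rightarrow> ('a \<Rightarrow> 'b \<Rightarrow> bool) \<Rightarrow>
   ('a \<Rightarrow> real) \<Rightarrow> ('a \<Rightarrow> real) \<Rightarrow> ('b \<Rightarrow> real) \<Rightarrow> ('b \<Rightarrow> real) \<Rightarrow> bool" where
  "stick_rep sA sB E xa ha xb vb \<longleftrightarrow>
     (\<forall>a\<in>set sA. ha a > 0) \<and> (\<forall>b\<in>set sB. vb b > 0) \<and>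
     (\<forall>i j. i < j \<and> j < length sA \<longrightarrow> xa (sA ! i) < xa (sA ! j)) \<and>
     (\<forall>p q. p < q \<and> q < length sB \<longrightarrow> xb (sB ! p) < xb (sB ! q)) \<and>
     (\<forall>a\<in>set sA. \<forall>b\<in>set sB. xa a \<noteq> xb b) \<and>
     (\<forall>a\<in>set sA. \<forall>b\<in>set sB.
        E a b \<longleftrightarrow> hseg (xa a) (ha a) \<inter> vseg (xb b) (vb b) \<noteq> {})"

definition has_stick_rep :: "'a list \<Rightarrow> 'b list \<Rightarrow> ('a \<Rightarrow> 'b \<Rightarrow> bool) \<Rightarrow> bool" where
  "has_stick_rep sA sB E \<longleftrightarrow> (\<exists>xa ha xb vb. stick_rep sA sB E xa ha xb vb)"

text \<open>Ordered bipartite adjacency matrix (0-based indices; True = entry 1).\<close>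

definition adj_mat :: "'a list \<Rightarrow> 'b list \<Rightarrow> ('a \<Rightarrow> 'b \<Rightarrow> bool) \<Rightarrow> nat \<Rightarrow> nat \<Rightarrow> bool" where
  "adj_mat sA sB E i p = E (sA ! i) (sB ! p)"

definition has_P1 :: "nat \<Rightarrow> nat \<Rightarrow> (nat \<Rightarrow> nat \<Rightarrow> bool) \<Rightarrow> bool" where
  "has_P1 n m M \<longleftrightarrow> (\<exists>i j k p q r. i < j \<and> j < k \<and> k < n \<and> p < q \<and> q < r \<and> r < m \<and>
      M i q \<and> \<not> M j q \<and> M j r \<and> M k p)"

definition has_P2 :: "nat \<Rightarrow> nat \<Rightarrow> (nat \<Rightarrow> nat \<Rightarrow> bool) \<Rightarrow> bool" where
  "has_P2 n m M \<longleftrightarrow> (\<exists>i j k p q. i < j \<and> j < k \<and> k < n \<and> p < q \<and> q < m \<and>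
      M i p \<and> \<not> M j p \<and> M j q \<and> M k p)"

definition has_P3 :: "nat \<Rightarrow> nat \<Rightarrow> (nat \<Rightarrow> nat \<Rightarrow> bool) \<Rightarrow> bool" where
  "has_P3 n m M \<longleftrightarrow> (\<exists>i j p q r. i < j \<and> j < n \<and> p < q \<and> q < r \<and> r < m \<and>
      M i q \<and> M j p \<and> \<not> M j q \<and> M j r)"

end

theory Submission
  imports Defs
begin

text \<open>Whenever rows \<open>j \<le> k\<close> and columns
  \<open>p' \<le> q\<close> have \<open>M k p' = 1\<close>, the ground point of row \<open>j\<close> lies left of that of
  column \<open>q\<close>; if moreover \<open>M i q = M j r = 1\<close> for some \<open>i < j\<close> and \<open>q < r\<close>, the vertical
  stick of \<open>q\<close> reaches up to row \<open>i\<close> and the horizontal stick of \<open>j\<close> reaches right to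
  column \<open>r\<close>, so they cross and \<open>M j q = 1\<close>. The patterns P1, P2, P3 are precisely the
  violations of this closure property, sorted by where the one at \<open>(k, p')\<close> lies.

  Conversely, if the closure property holds, put row \<open>i\<close> at \<open>i\<close>, put column \<open>p\<close> just
  after the last row having a one in a column \<open>\<le> p\<close>, and give every stick the length
  needed to reach its farthest neighbour. A spurious crossing of row \<open>i\<close> and column \<open>p\<close>
  then yields a neighbour \<open>r > p\<close> of \<open>i\<close> and a neighbour \<open>i' < i\<close> of \<open>p\<close>, which the
  closure property forbids.\<close>

lemma hseg_inter_vseg_iff:
  "hseg x h \<inter> vseg y v \<noteq> {} \<longleftrightarrow> x \<le> y \<and> y - x \<le> h \<and> y - x \<le> v"
proof
  assume "hseg x h \<inter> vseg y v \<noteq> {}"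
  then show "x \<le> y \<and> y - x \<le> h \<and> y - x \<le> v"
    unfolding hseg_def vseg_def by auto
next
  assume "x \<le> y \<and> y - x \<le> h \<and> y - x \<le> v"
  then have "(y, - x) \<in> hseg x h \<inter> vseg y v"
    unfolding hseg_def vseg_def by auto
  then show "hseg x h \<inter> vseg y v \<noteq> {}" by blast
qed

definition index_stick_rep ::
  "nat \<Rightarrow> nat \<Rightarrow> (nat \<Rightarrow> nat \<Rightarrow> bool) \<Rightarrow>
   (nat \<Rightarrow> real) \<Rightarrow> (nat \<Rightarrow> real) \<Rightarrow> (nat \<Rightarrow> real) \<Rightarrow> (nat \<Rightarrow> real) \<Rightarrow> bool" where
  "index_stick_rep n m M X H Y V \<longleftrightarrow>
     (\<forall>i<n. H i > 0) \<and> (\<forall>p<m. V p > 0) \<and>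
     (\<forall>i j. i < j \<and> j < n \<longrightarrow> X i < X j) \<and> (\<forall>p q. p < q \<and> q < m \<longrightarrow> Y p < Y q) \<and>
     (\<forall>i<n. \<forall>p<m. X i \<noteq> Y p) \<and>
     (\<forall>i<n. \<forall>p<m. M i p \<longleftrightarrow> X i \<le> Y p \<and> Y p - X i \<le> H i \<and> Y p - X i \<le> V p)"

lemma stick_rep_iff_index_stick_rep:
  "stick_rep sA sB E xa ha xb vb \<longleftrightarrow>
   index_stick_rep (length sA) (length sB) (adj_mat sA sB E)
     (\<lambda>i. xa (sA ! i)) (\<lambda>i. ha (sA ! i)) (\<lambda>p. xb (sB ! p)) (\<lambda>p. vb (sB ! p))"
  unfolding stick_rep_def index_stick_rep_def adj_mat_def hseg_inter_vseg_iff
  by (simp add: all_set_conv_all_nth)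

lemma index_stick_rep_cong:
  assumes "\<And>i. i < n \<Longrightarrow> X i = X' i" and "\<And>i. i < n \<Longrightarrow> H i = H' i"
    and "\<And>p. p < m \<Longrightarrow> Y p = Y' p" and "\<And>p. p < m \<Longrightarrow> V p = V' p"
  shows "index_stick_rep n m M X H Y V \<longleftrightarrow> index_stick_rep n m M X' H' Y' V'"
  unfolding index_stick_rep_def by (simp add: assms cong: conj_cong imp_cong)

lemma has_stick_rep_iff_index_stick_rep:
  assumes "distinct sA" and "distinct sB"
  shows "has_stick_rep sA sB E \<longleftrightarrow>
    (\<exists>X H Y V. index_stick_rep (length sA) (length sB) (adj_mat sA sB E) X H Y V)"
proof
  assume "has_stick_rep sA sB E"
  then show "\<exists>X H Y V. index_stick_rep (length sA) (length sB) (adj_mat sA sB E) X H Y V"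
    unfolding has_stick_rep_def stick_rep_iff_index_stick_rep by blast
next
  assume "\<exists>X H Y V. index_stick_rep (length sA) (length sB) (adj_mat sA sB E) X H Y V"
  then obtain X H Y V
    where rep: "index_stick_rep (length sA) (length sB) (adj_mat sA sB E) X H Y V"
    by blast
  define ia where "ia = inv_into {..<length sA} ((!) sA)"
  define ib where "ib = inv_into {..<length sB} ((!) sB)"
  have "ia (sA ! i) = i" if "i < length sA" for i
    unfolding ia_def using assms(1) that by (simp add: inj_on_nth)
  moreover have "ib (sB ! p) = p" if "p < length sB" for p
    unfolding ib_def using assms(2) that by (simp add: inj_on_nth)
  ultimately have "stick_rep sA sB E (X \<circ> ia) (H \<circ> ia) (Y \<circ> ib) (V \<circ> ib)"
    unfolding stick_rep_iff_index_stick_rep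
    using rep by (subst index_stick_rep_cong) auto
  then show "has_stick_rep sA sB E"
    unfolding has_stick_rep_def by blast
qed

definition sw_one :: "nat \<Rightarrow> (nat \<Rightarrow> nat \<Rightarrow> bool) \<Rightarrow> nat \<Rightarrow> nat \<Rightarrow> bool" where
  "sw_one n M i p \<longleftrightarrow> (\<exists>k p'. i \<le> k \<and> k < n \<and> p' \<le> p \<and> M k p')"

definition cross_closed :: "nat \<Rightarrow> nat \<Rightarrow> (nat \<Rightarrow> nat \<Rightarrow> bool) \<Rightarrow> bool" where
  "cross_closed n m M \<longleftrightarrow>
     (\<forall>i j q r. i < j \<and> j < n \<and> q < r \<and> r < m \<and> M i q \<and> M j r \<and> sw_one n M j q \<longrightarrow> M j q)"

lemma cross_closed_iff_no_patterns:
  "cross_closed n m M \<longleftrightarrow> \<not> has_P1 n m M \<and> \<not> has_P2 n m M \<and> \<not> has_P3 n m M"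
proof -
  have "sw_one n M j q \<longleftrightarrow> M j q \<or>
      (\<exists>k p. j < k \<and> k < n \<and> p < q \<and> M k p) \<or> (\<exists>k. j < k \<and> k < n \<and> M k q) \<or>
      (\<exists>p. p < q \<and> M j p)" if "j < n" for j q
    unfolding sw_one_def using that by (auto simp: order_le_less)
  then show ?thesis
    unfolding cross_closed_def has_P1_def has_P2_def has_P3_def
    by (smt (verit) less_trans)
qed

lemma index_stick_rep_sw_one_le:
  assumes "index_stick_rep n m M X H Y V" and "sw_one n M i p" and "p < m"
  shows "X i \<le> Y p"
proof -
  obtain k p' where "i \<le> k" "k < n" "p' \<le> p" "M k p'"
    using assms(2) unfolding sw_one_def by blast
  then have "X i \<le> X k" "X k \<le> Y p'" "Y p' \<le> Y p"
    using assms(1,3) unfolding index_stick_rep_def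
    by (auto simp: order_le_less)
  then show ?thesis by linarith
qed

lemma index_stick_rep_cross_closed:
  assumes rep: "index_stick_rep n m M X H Y V"
  shows "cross_closed n m M"
  unfolding cross_closed_def
proof (intro allI impI)
  fix i j q r
  assume "i < j \<and> j < n \<and> q < r \<and> r < m \<and> M i q \<and> M j r \<and> sw_one n M j q"
  then have ij: "i < j" "j < n" and qr: "q < r" "r < m" and "M i q" "M j r" "sw_one n M j q"
    by auto
  have "X j \<le> Y q"
    using index_stick_rep_sw_one_le[OF rep \<open>sw_one n M j q\<close>] qr by simp
  moreover have "Y q - X j \<le> V q"
  proof -
    have "X i < X j" using rep ij unfolding index_stick_rep_def by blast
    moreover have "Y q - X i \<le> V q" using rep ij qr \<open>M i q\<close> unfolding index_stick_rep_def by simp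
    ultimately show ?thesis by linarith
  qed
  moreover have "Y q - X j \<le> H j"
  proof -
    have "Y q < Y r" using rep qr unfolding index_stick_rep_def by blast
    moreover have "Y r - X j \<le> H j" using rep ij qr \<open>M j r\<close> unfolding index_stick_rep_def by simp
    ultimately show ?thesis by linarith
  qed
  ultimately show "M j q" using rep ij qr unfolding index_stick_rep_def by simp
qed

lemma down_closed_iff_less_card:
  assumes down: "\<And>i j. i \<le> j \<Longrightarrow> P j \<Longrightarrow> P i" and "i < n"
  shows "P i \<longleftrightarrow> i < card {j. j < n \<and> P j}"
proof
  assume "P i"
  then have "{..i} \<subseteq> {j. j < n \<and> P j}"
    using down \<open>i < n\<close> by auto
  from card_mono[OF _ this] show "i < card {j. j < n \<and> P j}" by simp
next
  assume less: "i < card {j. j < n \<and> P j}"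
  show "P i"
  proof (rule ccontr)
    assume "\<not> P i"
    then have "{j. j < n \<and> P j} \<subseteq> {..<i}"
      using down by (auto simp: not_less[symmetric])
    from card_mono[OF _ this] less show False by simp
  qed
qed

locale stick_construction =
  fixes n m :: nat and M :: "nat \<Rightarrow> nat \<Rightarrow> bool"
begin

definition level :: "nat \<Rightarrow> nat" where
  "level p = card {i. i < n \<and> sw_one n M i p}"

text \<open>The offset \<open>p / (2m + 2) < 1/2\<close> separates columns of equal level, and every
  positive gap \<open>ypos p - i\<close> is at least \<open>1/2\<close>, so the default length \<open>1/4\<close> of a stick
  without neighbours creates no crossing.\<close>

definition ypos :: "nat \<Rightarrow> real" where
  "ypos p = real (level p) - 1/2 + real p / (2 * real m + 2)"

definition hlen :: "nat \<Rightarrow> real" where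
  "hlen i = Max (insert (1/4) ((\<lambda>p. ypos p - real i) ` {p. p < m \<and> M i p}))"

definition vlen :: "nat \<Rightarrow> real" where
  "vlen p = Max (insert (1/4) ((\<lambda>i. ypos p - real i) ` {i. i < n \<and> M i p}))"

lemma sw_one_iff_less_level: "i < n \<Longrightarrow> sw_one n M i p \<longleftrightarrow> i < level p"
  unfolding level_def
  by (rule down_closed_iff_less_card) (auto simp: sw_one_def intro: order_trans)

lemma level_mono: "p \<le> q \<Longrightarrow> level p \<le> level q"
  unfolding level_def sw_one_def by (rule card_mono) (auto intro: order_trans)

lemma column_offset_bounds:
  "p < m \<Longrightarrow> 0 \<le> real p / (2 * real m + 2) \<and> real p / (2 * real m + 2) < 1/2"
  by (simp add: divide_simps)

lemma ypos_strict_mono: "p < q \<Longrightarrow> ypos p < ypos q"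
proof -
  assume "p < q"
  then have "real (level p) \<le> real (level q)" using level_mono by simp
  moreover have "real p / (2 * real m + 2) < real q / (2 * real m + 2)"
    using \<open>p < q\<close> by (simp add: divide_strict_right_mono)
  ultimately show ?thesis unfolding ypos_def by simp
qed

lemma ypos_ge_if_sw_one:
  assumes "i < n" and "p < m" and "sw_one n M i p"
  shows "real i + 1/2 \<le> ypos p"
proof -
  have "real i + 1 \<le> real (level p)" using assms sw_one_iff_less_level by simp
  then show ?thesis using column_offset_bounds[OF \<open>p < m\<close>] unfolding ypos_def by linarith
qed

lemma ypos_less_if_not_sw_one:
  assumes "i < n" and "p < m" and "\<not> sw_one n M i p"
  shows "ypos p < real i"
proof -
  have "real (level p) \<le> real i" using assms sw_one_iff_less_level by simp
  then show ?thesis using column_offset_bounds[OF \<open>p < m\<close>] unfolding ypos_def by linarith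
qed

lemma le_hlen_iff: "d \<le> hlen i \<longleftrightarrow> d \<le> 1/4 \<or> (\<exists>p<m. M i p \<and> d \<le> ypos p - real i)"
  unfolding hlen_def by (subst Max_ge_iff) auto

lemma le_vlen_iff: "d \<le> vlen p \<longleftrightarrow> d \<le> 1/4 \<or> (\<exists>i<n. M i p \<and> d \<le> ypos p - real i)"
  unfolding vlen_def by (subst Max_ge_iff) auto

lemma adjacent_iff_sticks_meet:
  assumes closed: "cross_closed n m M" and "i < n" and "p < m"
  shows "M i p \<longleftrightarrow>
    real i \<le> ypos p \<and> ypos p - real i \<le> hlen i \<and> ypos p - real i \<le> vlen p"
proof
  assume "M i p"
  then have "sw_one n M i p" unfolding sw_one_def using \<open>i < n\<close> by blast
  then have "real i \<le> ypos p"
    using ypos_ge_if_sw_one[OF \<open>i < n\<close> \<open>p < m\<close>] by linarith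
  then show "real i \<le> ypos p \<and> ypos p - real i \<le> hlen i \<and> ypos p - real i \<le> vlen p"
    using \<open>M i p\<close> \<open>i < n\<close> \<open>p < m\<close> le_hlen_iff le_vlen_iff by blast
next
  assume meet: "real i \<le> ypos p \<and> ypos p - real i \<le> hlen i \<and> ypos p - real i \<le> vlen p"
  show "M i p"
  proof (rule ccontr)
    assume "\<not> M i p"
    have "sw_one n M i p"
      using meet ypos_less_if_not_sw_one[OF \<open>i < n\<close> \<open>p < m\<close>] by fastforce
    then have gap: "1/4 < ypos p - real i"
      using ypos_ge_if_sw_one[OF \<open>i < n\<close> \<open>p < m\<close>] by linarith
    obtain r where "r < m" "M i r" "ypos p \<le> ypos r"
      using meet gap le_hlen_iff by force
    then have "p < r"
      using \<open>\<not> M i p\<close> ypos_strict_mono by (metis antisym_conv3 leD)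
    obtain i' where "i' < n" "M i' p" "real i' \<le> real i"
      using meet gap le_vlen_iff by force
    then have "i' < i" using \<open>\<not> M i p\<close> by (metis le_neq_implies_less of_nat_le_iff)
    then show False
      using closed \<open>i < n\<close> \<open>p < r\<close> \<open>r < m\<close> \<open>M i' p\<close> \<open>M i r\<close> \<open>sw_one n M i p\<close> \<open>\<not> M i p\<close>
      unfolding cross_closed_def by blast
  qed
qed

lemma cross_closed_index_stick_rep:
  assumes "cross_closed n m M"
  shows "index_stick_rep n m M real hlen ypos vlen"
  unfolding index_stick_rep_def
proof (intro conjI allI impI)
  show "0 < hlen i" for i using le_hlen_iff[of "1/4" i] by simp
  show "0 < vlen p" for p using le_vlen_iff[of "1/4" p] by simp
  show "real i < real j" if "i < j \<and> j < n" for i j using that by simp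
  show "ypos p < ypos q" if "p < q \<and> q < m" for p q using that ypos_strict_mono by blast
  show "real i \<noteq> ypos p" if "i < n" "p < m" for i p
    using that ypos_ge_if_sw_one ypos_less_if_not_sw_one by force
  show "M i p \<longleftrightarrow> real i \<le> ypos p \<and> ypos p - real i \<le> hlen i \<and> ypos p - real i \<le> vlen p"
    if "i < n" "p < m" for i p
    using adjacent_iff_sticks_meet[OF assms that] .
qed

end

theorem theorem2:
  fixes sA :: "'a list" and sB :: "'b list" and E :: "'a \<Rightarrow> 'b \<Rightarrow> bool"
  assumes "distinct sA" and "distinct sB"
  shows "has_stick_rep sA sB E \<longleftrightarrow>
    (let n = length sA; m = length sB; M = adj_mat sA sB E in
      \<not> has_P1 n m M \<and> \<not> has_P2 n m M \<and> \<not> has_P3 n m M)"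
  unfolding has_stick_rep_iff_index_stick_rep[OF assms] Let_def
    cross_closed_iff_no_patterns[symmetric]
  using index_stick_rep_cross_closed stick_construction.cross_closed_index_stick_rep by blast

end
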